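(* If $t\neq\pm2$ and $n$ are integers, then $h(t)=\left|\coprod_{j=0}^{11}X_{t,n+j}\right|$, where $h(t)$ is the number of equivalence classes of integral binary quadratic forms of discriminant $t^2-4$.
   Context: An integral binary quadratic form is $ax^2+bxy+cy^2$ with $a,b,c\in\mathbb{Z}$, of discriminant $b^2-4ac$; two forms are equivalent if they lie in the same orbit of the $\mathrm{SL}_2(\mathbb{Z})$-action $\left(\begin{bmatrix}\alpha&\beta\\ \gamma&\delta\end{bmatrix}\cdot f\right)(x,y)=f(\alpha x+\beta y,\gamma x+\delta y)$. $B_3=\langle\sigma_1,\sigma_2:\sigma_1\sigma_2\sigma_1=\sigma_2\sigma_1\sigma_2\rangle$; $\phi:B_3\to\mathrm{SL}_2(\mathbb{Z})$ is given by $\phi(\sigma_1)=\begin{bmatrix}1&1\\0&1\end{bmatrix}$, $\phi(\sigma_2)=\begin{bmatrix}1&0\\-1&1\end{bmatrix}$; $\epsilon:B_3\to\mathbb{Z}$ is the exponent sum. $X_{t,n}$ is the set of conjugacy classes of $g\in B_3$ with $\mathrm{tr}(\phi(g))=t$ and $\epsilon(g)=n$. *)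

theory Defs
  imports Main
begin

type_synonym bqf = "int \<times> int \<times> int"

definition qf_eval :: "bqf \<Rightarrow> int \<Rightarrow> int \<Rightarrow> int" where
  "qf_eval f x y = (case f of (a, b, c) \<Rightarrow> a * x^2 + b * x * y + c * y^2)"

definition disc :: "bqf \<Rightarrow> int" where
  "disc f = (case f of (a, b, c) \<Rightarrow> b^2 - 4 * a * c)"

definition qf_equiv :: "bqf \<Rightarrow> bqf \<Rightarrow> bool" where
  "qf_equiv f g \<longleftrightarrow> (\<exists>\<alpha> \<beta> \<gamma> \<delta>. \<alpha> * \<delta> - \<beta> * \<gamma> = 1 \<and>
      (\<forall>x y. qf_eval g x y = qf_eval f (\<alpha> * x + \<beta> * y) (\<gamma> * x + \<delta> * y)))"

definition qf_classes :: "int \<Rightarrow> bqf set set" where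
  "qf_classes D = {f. disc f = D} // {(f, g). qf_equiv f g}"

definition h :: "int \<Rightarrow> nat" where
  "h t = card (qf_classes (t^2 - 4))"

text \<open>A letter (i, s): i = False means sigma_1, i = True means sigma_2;
  s = True means exponent +1, s = False means exponent -1.
  Elements of B_3 are words modulo the congruence generated by free
  cancellation and the braid relation.\<close>
type_synonym letter = "bool \<times> bool"
type_synonym word = "letter list"

definition sig1 :: letter where "sig1 = (False, True)"
definition sig2 :: letter where "sig2 = (True, True)"

definition inv_word :: "word \<Rightarrow> word" where
  "inv_word w = rev (map (\<lambda>(i, s). (i, \<not> s)) w)"

inductive braid_eq :: "word \<Rightarrow> word \<Rightarrow> bool" where
  refl: "braid_eq w w"
| sym: "braid_eq u v \<Longrightarrow> braid_eq v u"
| trans: "braid_eq u v \<Longrightarrow> braid_eq v w \<Longrightarrow> braid_eq u w"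
| cancel: "braid_eq (u @ [(i, s), (i, \<not> s)] @ v) (u @ v)"
| braid: "braid_eq (u @ [sig1, sig2, sig1] @ v) (u @ [sig2, sig1, sig2] @ v)"

definition braid_conj :: "word \<Rightarrow> word \<Rightarrow> bool" where
  "braid_conj w v \<longleftrightarrow> (\<exists>u. braid_eq w (u @ v @ inv_word u))"

definition conj_class :: "word \<Rightarrow> word set" where
  "conj_class v = {w. braid_conj w v}"

text \<open>2x2 integer matrices [[a,b],[c,d]] as quadruples (a,b,c,d).\<close>
type_synonym mat2 = "int \<times> int \<times> int \<times> int"

definition mmult :: "mat2 \<Rightarrow> mat2 \<Rightarrow> mat2" where
  "mmult M N = (case M of (a, b, c, d) \<Rightarrow> case N of (e, f, g, k) \<Rightarrow>
      (a * e + b * g, a * f + b * k, c * e + d * g, c * f + d * k))"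

definition mid :: mat2 where "mid = (1, 0, 0, 1)"

definition mtrace :: "mat2 \<Rightarrow> int" where
  "mtrace M = (case M of (a, b, c, d) \<Rightarrow> a + d)"

definition phi_letter :: "letter \<Rightarrow> mat2" where
  "phi_letter l = (case l of
      (False, True) \<Rightarrow> (1, 1, 0, 1)
    | (False, False) \<Rightarrow> (1, -1, 0, 1)
    | (True, True) \<Rightarrow> (1, 0, -1, 1)
    | (True, False) \<Rightarrow> (1, 0, 1, 1))"

definition phi :: "word \<Rightarrow> mat2" where
  "phi w = foldr (\<lambda>l M. mmult (phi_letter l) M) w mid"

definition eps :: "word \<Rightarrow> int" where
  "eps w = sum_list (map (\<lambda>(i, s). if s then 1 else -1) w)"

definition X :: "int \<Rightarrow> int \<Rightarrow> word set set" where
  "X t n = {conj_class g | g. mtrace (phi g) = t \<and> eps g = n}"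

end

theory Submission
  imports Defs
begin

(* A matrix M = (a, b, c, d) of SL2(Z) with trace t gives the form c x^2 + (d - a) x y - b y^2
   of discriminant t^2 - 4; every form of that discriminant arises from exactly one such M, and
   conjugating M corresponds to the SL2(Z)-action on forms.  So the classes of forms of
   discriminant t^2 - 4 are the conjugacy classes of trace t in SL2(Z).  Lifting to B3: phi is
   surjective and its kernel is generated by the square of the full twist (sigma1 sigma2)^3,
   which is central with exponent sum 12.  Hence every conjugacy class of trace t in SL2(Z)
   lifts to exactly one conjugacy class of B3 in any 12 consecutive values of the exponent sum.
   The kernel is computed with the normal form coming from B3 / centre = Z/2 * Z/3 and a
   ping-pong argument.  For t <> 2, -2 the discriminant is not a square, and reduction of forms
   shows that there are finitely many classes. *)

section \<open>Matrices and words\<close>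

lemma mmult_assoc: "mmult (mmult A B) C = mmult A (mmult B C)"
  by (cases A; cases B; cases C) (simp add: mmult_def algebra_simps)

lemma mmult_mid_left [simp]: "mmult mid A = A"
  by (cases A) (simp add: mmult_def mid_def)

lemma mmult_mid_right [simp]: "mmult A mid = A"
  by (cases A) (simp add: mmult_def mid_def)

definition mdet :: "mat2 \<Rightarrow> int" where
  "mdet M = (case M of (a, b, c, d) \<Rightarrow> a * d - b * c)"

definition minv :: "mat2 \<Rightarrow> mat2" where
  "minv M = (case M of (a, b, c, d) \<Rightarrow> (d, -b, -c, a))"

lemma mdet_mmult: "mdet (mmult A B) = mdet A * mdet B"
  by (cases A; cases B) (simp add: mmult_def mdet_def algebra_simps)

lemma mdet_minv: "mdet (minv M) = mdet M"
  by (cases M) (simp add: minv_def mdet_def algebra_simps)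

lemma minv_minv [simp]: "minv (minv M) = M"
  by (cases M) (simp add: minv_def)

lemma minv_mmult_distrib: "minv (mmult A B) = mmult (minv B) (minv A)"
  by (cases A; cases B) (simp add: mmult_def minv_def algebra_simps)

lemma mdet_mid [simp]: "mdet mid = 1"
  by (simp add: mdet_def mid_def)

lemma mmult_minv_right: "mdet M = 1 \<Longrightarrow> mmult M (minv M) = mid"
  by (cases M) (simp add: mmult_def minv_def mid_def mdet_def algebra_simps)

lemma mtrace_conj:
  assumes "mdet Q = 1"
  shows "mtrace (mmult (minv Q) (mmult M Q)) = mtrace M"
proof -
  obtain a b c d where Q: "Q = (a, b, c, d)" by (cases Q)
  obtain e f g k where M: "M = (e, f, g, k)" by (cases M)
  have "a * d - b * c = 1" using assms by (simp add: Q mdet_def)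
  then show ?thesis unfolding Q M mtrace_def minv_def mmult_def by simp algebra
qed

lemma phi_Nil [simp]: "phi [] = mid"
  by (simp add: phi_def)

lemma phi_Cons [simp]: "phi (l # w) = mmult (phi_letter l) (phi w)"
  by (simp add: phi_def)

lemma phi_append [simp]: "phi (u @ v) = mmult (phi u) (phi v)"
  by (induction u) (simp_all add: mmult_assoc)

lemma mdet_phi: "mdet (phi w) = 1"
proof (induction w)
  case (Cons l w)
  have "mdet (phi_letter l) = 1"
    by (cases l) (auto simp: phi_letter_def mdet_def split: bool.splits)
  with Cons show ?case by (simp add: mdet_mmult)
qed simp

lemma inv_word_Nil [simp]: "inv_word [] = []"
  by (simp add: inv_word_def)

lemma inv_word_Cons [simp]: "inv_word (l # w) = inv_word w @ [(fst l, \<not> snd l)]"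
  by (cases l) (simp add: inv_word_def)

lemma inv_word_append [simp]: "inv_word (u @ v) = inv_word v @ inv_word u"
  by (simp add: inv_word_def)

lemma inv_word_inv_word [simp]: "inv_word (inv_word w) = w"
  by (induction w) auto

lemma phi_inv_word: "phi (inv_word w) = minv (phi w)"
proof (induction w)
  case (Cons l w)
  have "phi_letter (fst l, \<not> snd l) = minv (phi_letter l)"
    by (cases l) (auto simp: phi_letter_def minv_def split: bool.splits)
  with Cons show ?case by (simp add: minv_mmult_distrib)
qed (simp add: minv_def mid_def)

lemma eps_Nil [simp]: "eps [] = 0"
  by (simp add: eps_def)

lemma eps_Cons [simp]: "eps (l # w) = (if snd l then 1 else -1) + eps w"
  by (cases l) (simp add: eps_def)

lemma eps_append [simp]: "eps (u @ v) = eps u + eps v"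
  by (simp add: eps_def)

lemma eps_inv_word [simp]: "eps (inv_word w) = - eps w"
  by (induction w) auto

lemma eps_concat_replicate: "eps (concat (replicate n w)) = int n * eps w"
  by (induction n) (simp_all add: algebra_simps)

section \<open>The braid relation and the centre of \<open>B\<^sub>3\<close>\<close>

lemma braid_eq_refl [simp]: "braid_eq w w"
  by (rule braid_eq.refl)

lemma braid_eq_sym: "braid_eq u v \<Longrightarrow> braid_eq v u"
  by (rule braid_eq.sym)

lemma braid_eq_trans [trans]: "braid_eq u v \<Longrightarrow> braid_eq v w \<Longrightarrow> braid_eq u w"
  by (rule braid_eq.trans)

lemma braid_eq_cong: "braid_eq u v \<Longrightarrow> braid_eq (p @ u @ q) (p @ v @ q)"
proof (induction rule: braid_eq.induct)
  case (sym u v)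
  from sym.IH show ?case by (rule braid_eq.sym)
next
  case (trans u v w)
  then show ?case by (metis braid_eq.trans)
next
  case (cancel u i s v)
  then show ?case using braid_eq.cancel[of "p @ u" i s "v @ q"] by simp
next
  case (braid u v)
  then show ?case using braid_eq.braid[of "p @ u" "v @ q"] by simp
qed simp

lemma braid_eq_append: "braid_eq u u' \<Longrightarrow> braid_eq v v' \<Longrightarrow> braid_eq (u @ v) (u' @ v')"
  using braid_eq_cong[of u u' "[]" v] braid_eq_cong[of v v' u' "[]"] braid_eq_trans by auto

lemma eps_braid_eq: "braid_eq u v \<Longrightarrow> eps u = eps v"
  by (induction rule: braid_eq.induct) (auto simp: sig1_def sig2_def)

lemma phi_braid_eq: "braid_eq u v \<Longrightarrow> phi u = phi v"
proof (induction rule: braid_eq.induct)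
  case (cancel u i s v)
  have "mmult (phi_letter (i, s)) (phi_letter (i, \<not> s)) = mid"
    by (cases i; cases s) (simp_all add: phi_letter_def mmult_def mid_def)
  then show ?case by (simp add: mmult_assoc[symmetric])
next
  case (braid u v)
  have "phi [sig1, sig2, sig1] = phi [sig2, sig1, sig2]"
    by (simp add: sig1_def sig2_def phi_letter_def mmult_def mid_def)
  then show ?case by (metis phi_append)
qed auto

text \<open>Free reduction, used to certify identities that hold already in the free group.\<close>

fun free_red :: "word \<Rightarrow> word" where
  "free_red [] = []"
| "free_red (l # w) = (case free_red w of
      [] \<Rightarrow> [l]
    | m # r \<Rightarrow> if m = (fst l, \<not> snd l) then r else l # m # r)"

lemma braid_eq_free_red: "braid_eq w (free_red w)"
proof (induction w)
  case (Cons l w)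
  have lw: "braid_eq (l # w) (l # free_red w)"
    using braid_eq_cong[OF Cons, of "[l]" "[]"] by simp
  show ?case
  proof (cases "free_red w")
    case (Cons m r)
    show ?thesis
    proof (cases "m = (fst l, \<not> snd l)")
      case True
      have "braid_eq ([] @ [(fst l, snd l), (fst l, \<not> snd l)] @ r) ([] @ r)"
        by (rule braid_eq.cancel)
      then show ?thesis using lw Cons True by (simp add: braid_eq_trans)
    qed (use lw Cons in simp)
  qed (use lw in simp)
qed simp

lemma braid_eq_if_free_red_eq: "free_red u = free_red v \<Longrightarrow> braid_eq u v"
  by (metis braid_eq_free_red braid_eq_sym braid_eq_trans)

lemma braid_eq_inv_right: "braid_eq (w @ inv_word w) []"
proof (induction w)
  case (Cons l w)
  have "braid_eq ([l] @ (w @ inv_word w) @ [(fst l, \<not> snd l)]) ([l] @ [] @ [(fst l, \<not> snd l)])"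
    by (rule braid_eq_cong[OF Cons])
  moreover have "braid_eq [l, (fst l, \<not> snd l)] []"
    by (rule braid_eq_if_free_red_eq) (cases l, simp)
  ultimately show ?case by (auto intro: braid_eq_trans)
qed simp

lemma braid_eq_inv_left: "braid_eq (inv_word w @ w) []"
  using braid_eq_inv_right[of "inv_word w"] by simp

lemma braid_eq_if_append_inv: "braid_eq (u @ inv_word v) [] \<Longrightarrow> braid_eq u v"
proof -
  assume uv: "braid_eq (u @ inv_word v) []"
  have "braid_eq u (u @ inv_word v @ v)"
    using braid_eq_cong[OF braid_eq_sym[OF braid_eq_inv_left[of v]], of u "[]"] by simp
  also have "braid_eq (u @ inv_word v @ v) v"
    using braid_eq_cong[OF uv, of "[]" v] by simp
  finally show ?thesis .
qed

definition half_twist :: word where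
  "half_twist = [sig1, sig2, sig1]"

definition sigma12 :: word where
  "sigma12 = [sig1, sig2]"

definition full_twist :: word where
  "full_twist = sigma12 @ sigma12 @ sigma12"

definition central :: "word \<Rightarrow> bool" where
  "central c \<longleftrightarrow> (\<forall>u. braid_eq (c @ u) (u @ c))"

lemma half_twist_square: "braid_eq (half_twist @ half_twist) full_twist"
  using braid_eq.braid[of "[sig1, sig2, sig1]" "[]"]
  by (simp add: half_twist_def full_twist_def sigma12_def)

lemma central_if_commutes_letters:
  assumes "\<And>l. braid_eq (c @ [l]) ([l] @ c)"
  shows "central c"
  unfolding central_def
proof
  fix u show "braid_eq (c @ u) (u @ c)"
  proof (induction u)
    case (Cons l u)
    have "braid_eq ((c @ [l]) @ u) (([l] @ c) @ u)"
      using braid_eq_cong[OF assms[of l], of "[]" u] by simp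
    also have "braid_eq (([l] @ c) @ u) ([l] @ (u @ c))"
      using braid_eq_cong[OF Cons, of "[l]" "[]"] by simp
    finally show ?case by simp
  qed simp
qed

lemma central_if_commutes_positive_letters:
  assumes pos: "\<And>i. braid_eq (c @ [(i, True)]) ([(i, True)] @ c)"
  shows "central c"
proof (rule central_if_commutes_letters)
  fix l :: letter
  obtain i s where l: "l = (i, s)" by (cases l)
  show "braid_eq (c @ [l]) ([l] @ c)"
  proof (cases s)
    case False
    have inv1: "braid_eq [(i, False), (i, True)] []"
      and inv2: "braid_eq [(i, True), (i, False)] []"
      by (simp_all add: braid_eq_if_free_red_eq)
    have "braid_eq (c @ [l]) ([(i, False), (i, True)] @ c @ [l])"
      using braid_eq_cong[OF braid_eq_sym[OF inv1], of "[]" "c @ [l]"] by simp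
    also have "braid_eq \<dots> ([(i, False)] @ (c @ [(i, True)]) @ [l])"
      using braid_eq_cong[OF braid_eq_sym[OF pos[of i]], of "[(i, False)]" "[l]"] by simp
    also have "braid_eq \<dots> ([(i, False)] @ c @ [])"
      using braid_eq_cong[OF inv2, of "[(i, False)] @ c" "[]"] l False by simp
    finally show ?thesis using l False by simp
  qed (use l pos in simp)
qed

lemma central_full_twist: "central full_twist"
proof (rule central_if_commutes_positive_letters)
  fix i
  have sig1: "braid_eq (half_twist @ [sig1]) ([sig2] @ half_twist)"
    using braid_eq.braid[of "[]" "[sig1]"] by (simp add: half_twist_def)
  have sig2: "braid_eq (half_twist @ [sig2]) ([sig1] @ half_twist)"
    using braid_eq.braid[of "[sig1]" "[]"] by (simp add: half_twist_def braid_eq_sym)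
  have "braid_eq (half_twist @ half_twist @ [(i, True)]) ([(i, True)] @ half_twist @ half_twist)"
  proof (cases i)
    case True
    have "braid_eq (half_twist @ half_twist @ [sig2]) (half_twist @ [sig1] @ half_twist)"
      using braid_eq_cong[OF sig2, of half_twist "[]"] by simp
    also have "braid_eq \<dots> ([sig2] @ half_twist @ half_twist)"
      using braid_eq_cong[OF sig1, of "[]" half_twist] by simp
    finally show ?thesis using True by (simp add: sig1_def sig2_def)
  next
    case False
    have "braid_eq (half_twist @ half_twist @ [sig1]) (half_twist @ [sig2] @ half_twist)"
      using braid_eq_cong[OF sig1, of half_twist "[]"] by simp
    also have "braid_eq \<dots> ([sig1] @ half_twist @ half_twist)"
      using braid_eq_cong[OF sig2, of "[]" half_twist] by simp
    finally show ?thesis using False by (simp add: sig1_def sig2_def)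
  qed
  then have "braid_eq (full_twist @ [(i, True)]) ([(i, True)] @ half_twist @ half_twist)"
    using braid_eq_cong[OF braid_eq_sym[OF half_twist_square], of "[]" "[(i, True)]"]
    by (simp add: braid_eq_trans)
  also have "braid_eq \<dots> ([(i, True)] @ full_twist)"
    using braid_eq_cong[OF half_twist_square, of "[(i, True)]" "[]"] by simp
  finally show "braid_eq (full_twist @ [(i, True)]) ([(i, True)] @ full_twist)" .
qed

lemma central_inv_word:
  assumes "central c"
  shows "central (inv_word c)"
  unfolding central_def
proof
  fix u
  have "braid_eq (inv_word c @ u) (inv_word c @ (u @ c) @ inv_word c)"
    using braid_eq_cong[OF braid_eq_sym[OF braid_eq_inv_right[of c]], of "inv_word c @ u" "[]"]
    by simp
  also have "braid_eq \<dots> (inv_word c @ (c @ u) @ inv_word c)"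
    using assms unfolding central_def by (metis braid_eq_cong braid_eq_sym)
  also have "braid_eq \<dots> ([] @ u @ inv_word c)"
    using braid_eq_cong[OF braid_eq_inv_left[of c], of "[]" "u @ inv_word c"] by simp
  finally show "braid_eq (inv_word c @ u) (u @ inv_word c)" by simp
qed

lemma central_Nil [simp]: "central []"
  by (simp add: central_def)

lemma central_append:
  assumes a: "central a" and b: "central b"
  shows "central (a @ b)"
  unfolding central_def
proof
  fix u
  have "braid_eq (a @ b @ u) (a @ u @ b)"
    using b braid_eq_cong[of "b @ u" "u @ b" a "[]"] by (simp add: central_def)
  also have "braid_eq (a @ u @ b) (u @ a @ b)"
    using a braid_eq_cong[of "a @ u" "u @ a" "[]" b] by (simp add: central_def)
  finally show "braid_eq ((a @ b) @ u) (u @ a @ b)" by simp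
qed

lemma central_concat_replicate: "central c \<Longrightarrow> central (concat (replicate n c))"
  by (induction n) (simp_all add: central_append)

definition full_twist_pow :: "int \<Rightarrow> word" where
  "full_twist_pow k = (if 0 \<le> k then concat (replicate (nat k) full_twist)
                       else concat (replicate (nat (- k)) (inv_word full_twist)))"

lemma concat_replicate_snoc: "concat (replicate n w) @ w = concat (replicate (Suc n) w)"
  by (induction n) simp_all

lemma full_twist_pow_snoc_full_twist:
  "braid_eq (full_twist_pow k @ full_twist) (full_twist_pow (k + 1))"
proof (cases "0 \<le> k")
  case True
  then have "full_twist_pow (k + 1) = full_twist_pow k @ full_twist"
    by (simp add: full_twist_pow_def concat_replicate_snoc nat_add_distrib del: replicate_Suc)
  then show ?thesis by simp
next
  case False
  define n where "n = nat (- (k + 1))"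
  have "nat (- k) = Suc n" using False by (simp add: n_def)
  then have "full_twist_pow k = concat (replicate n (inv_word full_twist)) @ inv_word full_twist"
    using False by (simp add: full_twist_pow_def concat_replicate_snoc del: replicate_Suc)
  moreover have "full_twist_pow (k + 1) = concat (replicate n (inv_word full_twist))"
    using False by (cases "k + 1 = 0") (auto simp: full_twist_pow_def n_def)
  ultimately show ?thesis
    using braid_eq_cong[OF braid_eq_inv_left[of full_twist], of "full_twist_pow (k + 1)" "[]"]
    by simp
qed

lemma full_twist_pow_snoc_inv_full_twist:
  "braid_eq (full_twist_pow k @ inv_word full_twist) (full_twist_pow (k - 1))"
proof -
  have "braid_eq (full_twist_pow k @ inv_word full_twist)
                 ((full_twist_pow (k - 1) @ full_twist) @ inv_word full_twist)"
    using braid_eq_cong[OF braid_eq_sym[OF full_twist_pow_snoc_full_twist[of "k - 1"]],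
        of "[]" "inv_word full_twist"]
    by simp
  also have "braid_eq \<dots> (full_twist_pow (k - 1) @ [] @ [])"
    using braid_eq_cong[OF braid_eq_inv_right[of full_twist], of "full_twist_pow (k - 1)" "[]"]
    by simp
  finally show ?thesis by simp
qed

lemma braid_eq_move_central:
  assumes "central c" "braid_eq (p @ c) p'"
  shows "braid_eq (p @ u @ c) (p' @ u)"
proof -
  have "braid_eq (p @ u @ c) (p @ c @ u)"
    using assms(1) braid_eq_cong[of "c @ u" "u @ c" p "[]"] by (simp add: central_def braid_eq_sym)
  also have "braid_eq \<dots> (p' @ u)"
    using braid_eq_cong[OF assms(2), of "[]" u] by simp
  finally show ?thesis .
qed

lemma full_twist_pow_shift_full_twist:
  "braid_eq (full_twist_pow k @ u @ full_twist) (full_twist_pow (k + 1) @ u)"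
  by (rule braid_eq_move_central[OF central_full_twist full_twist_pow_snoc_full_twist])

lemma full_twist_pow_shift_inv_full_twist:
  "braid_eq (full_twist_pow k @ u @ inv_word full_twist) (full_twist_pow (k - 1) @ u)"
  by (rule braid_eq_move_central[OF central_inv_word[OF central_full_twist]
        full_twist_pow_snoc_inv_full_twist])

section \<open>Normal form and the kernel of \<open>phi\<close>\<close>

text \<open>Modulo the centre, \<open>B\<^sub>3\<close> is the free product of \<open>\<langle>half_twist\<rangle> \<cong> \<int>/2\<close> and
  \<open>\<langle>sigma12\<rangle> \<cong> \<int>/3\<close>. This gives the normal form
  \<open>full_twist\<^sup>k \<cdot> sigma12\<^sup>a \<cdot> (half_twist \<cdot> sigma12\<^sup>e\<^sub>1) \<cdots> (half_twist \<cdot> sigma12\<^sup>e\<^sub>m) \<cdot> half_twist\<^sup>b\<close>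
  with \<open>a < 3\<close> and \<open>e\<^sub>i \<in> {1, 2}\<close>; the exponent \<open>b \<in> {0, 1}\<close> is encoded as a boolean.\<close>

definition sigma12_pow :: "nat \<Rightarrow> word" where
  "sigma12_pow e = concat (replicate e sigma12)"

definition syllable :: "nat \<Rightarrow> word" where
  "syllable e = half_twist @ sigma12_pow e"

type_synonym nf = "int \<times> nat \<times> nat list \<times> bool"

fun nf_word :: "nf \<Rightarrow> word" where
  "nf_word (k, a, es, b) =
     full_twist_pow k @ sigma12_pow a @ concat (map syllable es) @ (if b then half_twist else [])"

fun nf_valid :: "nf \<Rightarrow> bool" where
  "nf_valid (k, a, es, b) \<longleftrightarrow> a < 3 \<and> set es \<subseteq> {1, 2}"

fun nf_snoc_half_twist :: "nf \<Rightarrow> nf" where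
  "nf_snoc_half_twist (k, a, es, b) = (if b then (k + 1, a, es, False) else (k, a, es, True))"

fun nf_snoc_sigma12 :: "nf \<Rightarrow> nf" where
  "nf_snoc_sigma12 (k, a, es, b) =
     (if b then (k, a, es @ [1], False)
      else if es = [] then (if a < 2 then (k, a + 1, [], False) else (k + 1, 0, [], False))
      else if last es = 1 then (k, a, butlast es @ [2], False)
      else (k + 1, a, butlast es, True))"

lemma nf_snoc_half_twist_correct:
  assumes "nf_valid s"
  shows "nf_valid (nf_snoc_half_twist s) \<and>
         braid_eq (nf_word s @ half_twist) (nf_word (nf_snoc_half_twist s))"
proof -
  obtain k a es b where s: "s = (k, a, es, b)" by (cases s)
  let ?p = "sigma12_pow a @ concat (map syllable es)"
  have "braid_eq (full_twist_pow k @ ?p @ half_twist @ half_twist) (full_twist_pow (k + 1) @ ?p)"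
    using braid_eq_cong[OF half_twist_square, of "full_twist_pow k @ ?p" "[]"]
      full_twist_pow_shift_full_twist[of k ?p]
    by (simp add: braid_eq_trans)
  then show ?thesis using assms by (simp add: s)
qed

lemma nf_snoc_sigma12_correct:
  assumes "nf_valid s"
  shows "nf_valid (nf_snoc_sigma12 s) \<and>
         braid_eq (nf_word s @ sigma12) (nf_word (nf_snoc_sigma12 s))"
proof -
  obtain k a es b where s: "s = (k, a, es, b)" by (cases s)
  consider "b" | "\<not> b" "es = []" | es' e where "\<not> b" "es = es' @ [e]"
    by (metis rev_exhaust)
  then show ?thesis
  proof cases
    case 1
    then show ?thesis using assms by (simp add: s syllable_def sigma12_pow_def numeral_2_eq_2)
  next
    case 2
    have "a = 0 \<or> a = 1 \<or> a = 2" using assms s by auto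
    moreover have "braid_eq (full_twist_pow k @ [] @ full_twist) (full_twist_pow (k + 1) @ [])"
      by (rule full_twist_pow_shift_full_twist)
    ultimately show ?thesis
      using assms 2 by (auto simp: s sigma12_pow_def numeral_2_eq_2 full_twist_def)
  next
    case 3
    have "e = 1 \<or> e = 2" using assms s 3 by auto
    moreover have "braid_eq (full_twist_pow k @ (sigma12_pow a @ concat (map syllable es') @ half_twist) @ full_twist)
                            (full_twist_pow (k + 1) @ sigma12_pow a @ concat (map syllable es') @ half_twist)"
      using full_twist_pow_shift_full_twist[of k "sigma12_pow a @ concat (map syllable es') @ half_twist"]
      by simp
    ultimately show ?thesis
      using assms 3 by (auto simp: s syllable_def sigma12_pow_def numeral_2_eq_2 full_twist_def)
  qed
qed

definition twist_word :: "bool list \<Rightarrow> word" where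
  "twist_word q = concat (map (\<lambda>t. if t then half_twist else sigma12) q)"

lemma nf_append_twist_word:
  "nf_valid s \<Longrightarrow> \<exists>s'. nf_valid s' \<and> braid_eq (nf_word s @ twist_word q) (nf_word s')"
proof (induction q arbitrary: s)
  case Nil
  then show ?case by (intro exI[of _ s]) (simp add: twist_word_def del: nf_word.simps)
next
  case (Cons t q)
  define s1 where "s1 = (if t then nf_snoc_half_twist s else nf_snoc_sigma12 s)"
  have s1: "nf_valid s1" "braid_eq (nf_word s @ twist_word [t]) (nf_word s1)"
    using nf_snoc_half_twist_correct[OF Cons.prems] nf_snoc_sigma12_correct[OF Cons.prems]
    by (simp_all add: s1_def twist_word_def del: nf_word.simps nf_valid.simps)
  obtain s' where s': "nf_valid s'" "braid_eq (nf_word s1 @ twist_word q) (nf_word s')"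
    using Cons.IH[OF s1(1)] by blast
  have "braid_eq (nf_word s @ twist_word [t] @ twist_word q) (nf_word s1 @ twist_word q)"
    using braid_eq_cong[OF s1(2), of "[]" "twist_word q"] by simp
  then have "braid_eq (nf_word s @ twist_word (t # q)) (nf_word s')"
    using s'(2) braid_eq_trans by (simp add: twist_word_def)
  then show ?case using s'(1) by blast
qed

text \<open>Two of the four identities (for \<open>sigma1\<inverse>\<close> and \<open>sigma2\<close>) need
  \<open>half_twist\<^sup>2 = full_twist\<close> on top of free cancellation.\<close>

lemma letter_eq_twist_word: "\<exists>q. braid_eq [l] (inv_word full_twist @ twist_word q)"
proof -
  have twists: "braid_eq (inv_word full_twist @ half_twist @ half_twist) []"
    using braid_eq_trans[OF braid_eq_cong[OF half_twist_square, of "inv_word full_twist" "[]"]]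
      braid_eq_inv_left
    by simp
  have by_free_red: "braid_eq [l] (inv_word full_twist @ twist_word q)"
    if "free_red (inv_word full_twist @ twist_word q @ inv_word [l]) \<in>
          {[], free_red (inv_word full_twist @ half_twist @ half_twist)}" for q
  proof (rule braid_eq_sym, rule braid_eq_if_append_inv)
    show "braid_eq ((inv_word full_twist @ twist_word q) @ inv_word [l]) []"
      using that braid_eq_if_free_red_eq[of _ "[]"] braid_eq_if_free_red_eq[of _ "inv_word full_twist @ half_twist @ half_twist"]
        twists braid_eq_trans
      by fastforce
  qed
  define q where "q = (case l of
      (False, True) \<Rightarrow> [False, False, True]
    | (False, False) \<Rightarrow> [True, False]
    | (True, True) \<Rightarrow> [True, False, False]
    | (True, False) \<Rightarrow> [False, True])"
  obtain i s where l: "l = (i, s)" by (cases l)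
  then have "free_red (inv_word full_twist @ twist_word q @ inv_word [l]) \<in>
               {[], free_red (inv_word full_twist @ half_twist @ half_twist)}"
    by (cases i; cases s)
      (simp_all add: q_def twist_word_def half_twist_def sigma12_def full_twist_def sig1_def sig2_def)
  then show ?thesis by (blast intro: by_free_red)
qed

theorem normal_form: "\<exists>s. nf_valid s \<and> braid_eq w (nf_word s)"
proof (induction w rule: rev_induct)
  case Nil
  have "nf_valid (0, 0, [], False) \<and> braid_eq [] (nf_word (0, 0, [], False))"
    by (simp add: full_twist_pow_def sigma12_pow_def)
  then show ?case by blast
next
  case (snoc l w)
  then obtain k a es b where s: "nf_valid (k, a, es, b)" "braid_eq w (nf_word (k, a, es, b))"
    by (metis prod_cases4)
  obtain q where q: "braid_eq [l] (inv_word full_twist @ twist_word q)"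
    using letter_eq_twist_word by blast
  have "braid_eq (w @ [l]) (nf_word (k, a, es, b) @ inv_word full_twist @ twist_word q)"
    using braid_eq_append[OF s(2) q] .
  also have "braid_eq \<dots> (nf_word (k - 1, a, es, b) @ twist_word q)"
  proof -
    have "braid_eq (nf_word (k, a, es, b) @ inv_word full_twist) (nf_word (k - 1, a, es, b))"
      using full_twist_pow_shift_inv_full_twist[of k
          "sigma12_pow a @ concat (map syllable es) @ (if b then half_twist else [])"]
      by simp
    from braid_eq_cong[OF this, of "[]" "twist_word q"] show ?thesis
      by (simp del: nf_word.simps)
  qed
  finally have "braid_eq (w @ [l]) (nf_word (k - 1, a, es, b) @ twist_word q)" .
  moreover obtain s' where "nf_valid s'"
    "braid_eq (nf_word (k - 1, a, es, b) @ twist_word q) (nf_word s')"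
    using nf_append_twist_word[of "(k - 1, a, es, b)" q] s(1) by auto
  ultimately show ?case by (blast intro: braid_eq_trans)
qed

definition scalar_mat :: "int \<Rightarrow> mat2" where
  "scalar_mat c = (c, 0, 0, c)"

lemma phi_full_twist: "phi full_twist = scalar_mat (-1)"
  by (simp add: full_twist_def sigma12_def sig1_def sig2_def phi_letter_def mmult_def mid_def
      scalar_mat_def)

lemma phi_concat_replicate_full_twist:
  "phi (concat (replicate n full_twist)) = scalar_mat ((-1) ^ n)"
  by (induction n) (simp_all add: phi_full_twist scalar_mat_def mid_def mmult_def)

lemma phi_concat_replicate_inv_full_twist:
  "phi (concat (replicate n (inv_word full_twist))) = scalar_mat ((-1) ^ n)"
  by (induction n) (simp_all add: phi_inv_word phi_full_twist scalar_mat_def minv_def mid_def mmult_def)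

lemma phi_full_twist_pow: "phi (full_twist_pow k) = scalar_mat (if even k then 1 else -1)"
  by (simp add: full_twist_pow_def phi_concat_replicate_full_twist
      phi_concat_replicate_inv_full_twist even_nat_iff)

lemma eps_full_twist_pow: "eps (full_twist_pow k) = 6 * k"
proof -
  have "eps full_twist = 6" by (simp add: full_twist_def sigma12_def sig1_def sig2_def)
  then show ?thesis by (simp add: full_twist_pow_def eps_concat_replicate)
qed

text \<open>Ping-pong: the images of the syllables have this sign pattern, it is preserved under
  products, and it excludes \<open>\<plusminus>1\<close> even after multiplying by the images of the
  short prefix and suffix of a normal form.\<close>

definition pingpong_mat :: "mat2 \<Rightarrow> bool" where
  "pingpong_mat M \<longleftrightarrow> (\<exists>\<sigma> a b c d. (\<sigma> = 1 \<or> \<sigma> = -1) \<and> M = (\<sigma> * a, - \<sigma> * b, - \<sigma> * c, \<sigma> * d) \<and>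
      a \<ge> 1 \<and> d \<ge> 1 \<and> b \<ge> 0 \<and> c \<ge> 0 \<and> b + c \<ge> 1)"

lemma phi_syllable: "phi (syllable (Suc 0)) = (-1, 1, 0, -1)" "phi (syllable 2) = (-1, 0, 1, -1)"
  by (simp_all add: syllable_def half_twist_def sigma12_pow_def sigma12_def sig1_def sig2_def
      phi_letter_def mmult_def mid_def numeral_2_eq_2)

lemma pingpong_matI:
  assumes "\<sigma> = 1 \<or> \<sigma> = -1" "a \<ge> 1" "b \<ge> 0" "c \<ge> 0" "d \<ge> 1" "b + c \<ge> 1"
  shows "pingpong_mat (\<sigma> * a, - \<sigma> * b, - \<sigma> * c, \<sigma> * d)"
  using assms unfolding pingpong_mat_def by blast

lemma pingpong_mat_syllables:
  "es \<noteq> [] \<Longrightarrow> set es \<subseteq> {1, 2} \<Longrightarrow> pingpong_mat (phi (concat (map syllable es)))"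
proof (induction es rule: list_nonempty_induct)
  case (single e)
  then have "e = 1 \<or> e = 2" by simp
  then show ?case
  proof
    assume "e = 1"
    then show ?thesis using pingpong_matI[of "-1" 1 1 0 1] by (simp add: phi_syllable)
  next
    assume "e = 2"
    then show ?thesis using pingpong_matI[of "-1" 1 0 1 1] by (simp add: phi_syllable)
  qed
next
  case (cons e es)
  then have e: "e = 1 \<or> e = 2" and "pingpong_mat (phi (concat (map syllable es)))" by simp_all
  then obtain \<sigma> a b c d where \<sigma>: "\<sigma> = 1 \<or> \<sigma> = -1"
    and M: "phi (concat (map syllable es)) = (\<sigma> * a, - \<sigma> * b, - \<sigma> * c, \<sigma> * d)"
    and pos: "a \<ge> 1" "d \<ge> 1" "b \<ge> 0" "c \<ge> 0" "b + c \<ge> 1"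
    unfolding pingpong_mat_def by blast
  have \<sigma>': "- \<sigma> = 1 \<or> - \<sigma> = -1" using \<sigma> by auto
  from e show ?case
  proof
    assume "e = 1"
    then have "phi (concat (map syllable (e # es))) =
               (- \<sigma> * (a + c), - (- \<sigma>) * (b + d), - (- \<sigma>) * c, - \<sigma> * d)"
      by (simp add: phi_syllable M mmult_def algebra_simps)
    then show ?thesis using pingpong_matI[OF \<sigma>'] pos by simp
  next
    assume "e = 2"
    then have "phi (concat (map syllable (e # es))) =
               (- \<sigma> * a, - (- \<sigma>) * b, - (- \<sigma>) * (a + c), - \<sigma> * (b + d))"
      by (simp add: phi_syllable M mmult_def algebra_simps)
    then show ?thesis using pingpong_matI[OF \<sigma>'] pos by simp
  qed
qed

lemma phi_sigma12_pow_cases: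
  "a < 3 \<Longrightarrow> phi (sigma12_pow a) \<in> {mid, (0, 1, -1, 1), (-1, 1, -1, 0)}"
  by (auto simp: less_Suc_eq numeral_3_eq_3 sigma12_pow_def sigma12_def sig1_def sig2_def
      phi_letter_def mmult_def mid_def)

lemma phi_half_twist: "phi half_twist = (0, 1, -1, 0)"
  by (simp add: half_twist_def sig1_def sig2_def phi_letter_def mmult_def mid_def)

lemma pingpong_mat_not_scalar:
  assumes "pingpong_mat M" "P \<in> {mid, (0, 1, -1, 1), (-1, 1, -1, 0)}" "Q \<in> {mid, (0, 1, -1, 0)}"
  shows "mmult P (mmult M Q) \<noteq> scalar_mat k"
proof -
  obtain \<sigma> a b c d where \<sigma>: "\<sigma> = 1 \<or> \<sigma> = -1" and M: "M = (\<sigma> * a, - \<sigma> * b, - \<sigma> * c, \<sigma> * d)"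
    and pos: "a \<ge> 1" "b \<ge> 0" "c \<ge> 0" "d \<ge> 1" "b + c \<ge> 1"
    using assms(1) unfolding pingpong_mat_def by blast
  show ?thesis
    using assms(2,3) \<sigma> pos by (auto simp: M mmult_def mid_def scalar_mat_def)
qed

lemma phi_kernel:
  assumes "phi w = mid"
  shows "\<exists>m. braid_eq w (full_twist_pow (2 * m))"
proof -
  obtain k a es b where valid: "nf_valid (k, a, es, b)" and w: "braid_eq w (nf_word (k, a, es, b))"
    using normal_form by (metis prod_cases4)
  define P where "P = phi (sigma12_pow a)"
  define S where "S = phi (concat (map syllable es))"
  define Q where "Q = phi (if b then half_twist else [])"
  define c :: int where "c = (if even k then 1 else -1)"
  have P: "P \<in> {mid, (0, 1, -1, 1), (-1, 1, -1, 0)}"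
    using valid phi_sigma12_pow_cases by (simp add: P_def)
  have Q: "Q \<in> {mid, (0, 1, -1, 0)}"
    by (simp add: Q_def phi_half_twist)
  have "mmult (scalar_mat c) (mmult P (mmult S Q)) = mid"
    using phi_braid_eq[OF w] assms by (simp add: phi_full_twist_pow c_def P_def S_def Q_def)
  then have PSQ: "mmult P (mmult S Q) = scalar_mat c"
    by (cases "mmult P (mmult S Q)") (auto simp: c_def mmult_def scalar_mat_def mid_def)
  have "es = []"
  proof (rule ccontr)
    assume "es \<noteq> []"
    with valid have "pingpong_mat S" by (simp add: S_def pingpong_mat_syllables)
    with PSQ P Q show False using pingpong_mat_not_scalar by blast
  qed
  moreover have "a = 0 \<or> a = Suc 0 \<or> a = 2" using valid by auto
  ultimately have "a = 0 \<and> \<not> b \<and> c = 1"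
    using PSQ
    by (cases b; elim disjE)
      (auto simp: P_def Q_def S_def numeral_2_eq_2 sigma12_pow_def sigma12_def half_twist_def
        sig1_def sig2_def phi_letter_def mmult_def mid_def scalar_mat_def)
  then have "nf_word (k, a, es, b) = full_twist_pow k" "even k"
    using \<open>es = []\<close> by (auto simp: c_def sigma12_pow_def split: if_splits)
  with w show ?thesis by (metis evenE)
qed

lemma braid_eq_if_phi_eq_eps_close:
  assumes "phi u = phi v" and "\<bar>eps u - eps v\<bar> < 12"
  shows "braid_eq u v"
proof -
  have "phi (u @ inv_word v) = mid"
    using assms(1) by (simp add: phi_inv_word mmult_minv_right mdet_phi)
  then obtain m where m: "braid_eq (u @ inv_word v) (full_twist_pow (2 * m))"
    using phi_kernel by blast
  have "eps u - eps v = 12 * m" using eps_braid_eq[OF m] by (simp add: eps_full_twist_pow)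
  with assms(2) have "m = 0" by simp
  with m show ?thesis by (simp add: full_twist_pow_def braid_eq_if_append_inv)
qed

section \<open>Surjectivity of \<open>phi\<close>\<close>

definition sigma1_pow :: "int \<Rightarrow> word" where
  "sigma1_pow k = (if 0 \<le> k then replicate (nat k) sig1 else replicate (nat (- k)) (False, False))"

lemma phi_sigma1_pow: "phi (sigma1_pow k) = (1, k, 0, 1)"
proof -
  have "phi (replicate n (False, s)) = (1, if s then int n else - int n, 0, 1)" for n s
    by (induction n) (auto simp: phi_letter_def mmult_def mid_def)
  then show ?thesis by (simp add: sigma1_pow_def sig1_def)
qed

lemma phi_surj_lower_left_zero:
  assumes "mdet (a, b, 0, d) = 1"
  shows "\<exists>w. phi w = (a, b, 0, d)"
proof -
  have "(a = 1 \<and> d = 1) \<or> (a = -1 \<and> d = -1)"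
    using assms by (simp add: mdet_def zmult_eq_1_iff)
  then show ?thesis
  proof
    assume "a = 1 \<and> d = 1"
    then show ?thesis using phi_sigma1_pow[of b] by auto
  next
    assume "a = -1 \<and> d = -1"
    then have "phi (full_twist @ sigma1_pow (- b)) = (a, b, 0, d)"
      by (simp add: phi_full_twist phi_sigma1_pow scalar_mat_def mmult_def)
    then show ?thesis by blast
  qed
qed

lemma phi_surj:
  assumes "mdet M = 1"
  shows "\<exists>w. phi w = M"
proof -
  obtain a b c d where M: "M = (a, b, c, d)" by (cases M)
  have "mdet (a, b, c, d) = 1 \<Longrightarrow> \<exists>w. phi w = (a, b, c, d)"
  proof (induction "nat (\<bar>a\<bar> + \<bar>c\<bar>)" arbitrary: a b c d rule: less_induct)
    case less
    consider "c = 0" | "a = 0" | "c \<noteq> 0" "a \<noteq> 0" "\<bar>c\<bar> \<le> \<bar>a\<bar>" | "c \<noteq> 0" "a \<noteq> 0" "\<bar>a\<bar> < \<bar>c\<bar>"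
      by linarith
    then show ?case
    proof cases
      case 1
      then show ?thesis using less.prems phi_surj_lower_left_zero by simp
    next
      case 2
      have "mdet (c, d, 0, -b) = 1" using less.prems 2 by (simp add: mdet_def mult.commute)
      then obtain w where w: "phi w = (c, d, 0, -b)" using phi_surj_lower_left_zero by blast
      have "phi (half_twist @ half_twist @ half_twist @ w) = (a, b, c, d)"
        using 2 by (simp add: w phi_half_twist mmult_def)
      then show ?thesis by blast
    next
      case 3
      define s where "s = ((0 < a) = (0 < c))"
      define a' where "a' = (if s then a - c else a + c)"
      define b' where "b' = (if s then b - d else b + d)"
      have "nat (\<bar>a'\<bar> + \<bar>c\<bar>) < nat (\<bar>a\<bar> + \<bar>c\<bar>)" "mdet (a', b', c, d) = 1"
        using 3 less.prems by (auto simp: a'_def b'_def s_def mdet_def algebra_simps abs_if)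
      then obtain w where w: "phi w = (a', b', c, d)" using less.hyps by blast
      have "phi ((False, s) # w) = (a, b, c, d)"
        by (cases s) (simp_all add: w a'_def b'_def phi_letter_def mmult_def)
      then show ?thesis by blast
    next
      case 4
      define s where "s = ((0 < a) \<noteq> (0 < c))"
      define c' where "c' = (if s then c + a else c - a)"
      define d' where "d' = (if s then d + b else d - b)"
      have "nat (\<bar>a\<bar> + \<bar>c'\<bar>) < nat (\<bar>a\<bar> + \<bar>c\<bar>)" "mdet (a, b, c', d') = 1"
        using 4 less.prems by (auto simp: c'_def d'_def s_def mdet_def algebra_simps abs_if)
      then obtain w where w: "phi w = (a, b, c', d')" using less.hyps by blast
      have "phi ((True, s) # w) = (a, b, c, d)"
        by (cases s) (simp_all add: w c'_def d'_def phi_letter_def mmult_def)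
      then show ?thesis by blast
    qed
  qed
  with assms show ?thesis by (simp add: M)
qed

lemma phi_surj_eps_window:
  assumes "mdet M = 1"
  shows "\<exists>w. phi w = M \<and> n \<le> eps w \<and> eps w < n + 12"
proof -
  obtain w where w: "phi w = M" using phi_surj[OF assms] by blast
  define m where "m = (eps w - n) div 12"
  have "phi (full_twist_pow (- 2 * m) @ w) = M"
    by (simp add: phi_full_twist_pow w scalar_mat_def mid_def[symmetric])
  moreover have "eps (full_twist_pow (- 2 * m) @ w) = n + (eps w - n) mod 12"
    by (simp add: eps_full_twist_pow m_def minus_div_mult_eq_mod [symmetric] algebra_simps)
  moreover have "0 \<le> (eps w - n) mod 12" "(eps w - n) mod 12 < 12" by simp_all
  ultimately show ?thesis by (intro exI[of _ "full_twist_pow (- 2 * m) @ w"]) simp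
qed

section \<open>Binary quadratic forms\<close>

definition qf_act :: "mat2 \<Rightarrow> bqf \<Rightarrow> bqf" where
  "qf_act Q f = (case Q of (\<alpha>, \<beta>, \<gamma>, \<delta>) \<Rightarrow> case f of (a, b, c) \<Rightarrow>
     (a * \<alpha>^2 + b * \<alpha> * \<gamma> + c * \<gamma>^2,
      2 * a * \<alpha> * \<beta> + b * (\<alpha> * \<delta> + \<beta> * \<gamma>) + 2 * c * \<gamma> * \<delta>,
      a * \<beta>^2 + b * \<beta> * \<delta> + c * \<delta>^2))"

lemma qf_eval_qf_act:
  "qf_eval (qf_act (\<alpha>, \<beta>, \<gamma>, \<delta>) f) x y = qf_eval f (\<alpha> * x + \<beta> * y) (\<gamma> * x + \<delta> * y)"
  by (cases f) (simp add: qf_eval_def qf_act_def power2_eq_square algebra_simps)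

lemma qf_eqI:
  assumes "\<And>x y. qf_eval f x y = qf_eval g x y"
  shows "f = g"
  using assms[of 1 0] assms[of 0 1] assms[of 1 1] by (cases f; cases g) (simp add: qf_eval_def)

lemma qf_equiv_iff_qf_act: "qf_equiv f g \<longleftrightarrow> (\<exists>Q. mdet Q = 1 \<and> g = qf_act Q f)"
proof
  assume "qf_equiv f g"
  then obtain \<alpha> \<beta> \<gamma> \<delta> where "\<alpha> * \<delta> - \<beta> * \<gamma> = 1"
    and "\<forall>x y. qf_eval g x y = qf_eval f (\<alpha> * x + \<beta> * y) (\<gamma> * x + \<delta> * y)"
    unfolding qf_equiv_def by blast
  then show "\<exists>Q. mdet Q = 1 \<and> g = qf_act Q f"
    by (intro exI[of _ "(\<alpha>, \<beta>, \<gamma>, \<delta>)"]) (simp add: mdet_def qf_eqI qf_eval_qf_act)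
next
  assume "\<exists>Q. mdet Q = 1 \<and> g = qf_act Q f"
  then obtain \<alpha> \<beta> \<gamma> \<delta> where "mdet (\<alpha>, \<beta>, \<gamma>, \<delta>) = 1" "g = qf_act (\<alpha>, \<beta>, \<gamma>, \<delta>) f"
    by auto
  then show "qf_equiv f g"
    unfolding qf_equiv_def by (simp add: mdet_def qf_eval_qf_act) blast
qed

lemma qf_act_mmult: "qf_act (mmult P Q) f = qf_act Q (qf_act P f)"
  by (cases P; cases Q; cases f) (simp add: qf_act_def mmult_def power2_eq_square algebra_simps)

lemma qf_act_mid: "qf_act mid f = f"
  by (cases f) (simp add: qf_act_def mid_def)

lemma disc_qf_act: "disc (qf_act Q f) = (mdet Q)^2 * disc f"
  by (cases Q; cases f) (simp add: qf_act_def disc_def mdet_def power2_eq_square algebra_simps)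

lemma qf_equiv_refl: "qf_equiv f f"
  unfolding qf_equiv_iff_qf_act by (intro exI[of _ mid]) (simp add: qf_act_mid)

lemma qf_equiv_sym: "qf_equiv f g \<Longrightarrow> qf_equiv g f"
  unfolding qf_equiv_iff_qf_act
  by (metis mdet_minv mmult_minv_right qf_act_mid qf_act_mmult)

lemma qf_equiv_trans: "qf_equiv f g \<Longrightarrow> qf_equiv g k \<Longrightarrow> qf_equiv f k"
  unfolding qf_equiv_iff_qf_act by (metis mdet_mmult mult_1 qf_act_mmult)

lemma equiv_qf_equiv: "equiv UNIV {(f, g). qf_equiv f g}"
  unfolding equiv_def refl_on_def sym_def trans_def
  using qf_equiv_refl qf_equiv_sym qf_equiv_trans by blast

lemma disc_qf_equiv: "qf_equiv f g \<Longrightarrow> disc g = disc f"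
  unfolding qf_equiv_iff_qf_act by (auto simp: disc_qf_act)

text \<open>The form of \<open>M = (a, b, c, d)\<close> vanishes exactly at the fixed points \<open>(x : y)\<close> of \<open>M\<close>
  on the projective line: \<open>(a x + b y) y - (c x + d y) x = - (c x\<^sup>2 + (d - a) x y - b y\<^sup>2)\<close>.\<close>

definition form_of_mat :: "mat2 \<Rightarrow> bqf" where
  "form_of_mat M = (case M of (a, b, c, d) \<Rightarrow> (c, d - a, - b))"

lemma disc_form_of_mat: "mdet M = 1 \<Longrightarrow> disc (form_of_mat M) = (mtrace M)^2 - 4"
  by (cases M) (simp add: form_of_mat_def disc_def mdet_def mtrace_def power2_eq_square algebra_simps)

lemma qf_act_form_of_mat: "qf_act Q (form_of_mat M) = form_of_mat (mmult (minv Q) (mmult M Q))"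
  by (cases Q; cases M) (simp add: qf_act_def form_of_mat_def minv_def mmult_def power2_eq_square algebra_simps)

lemma form_of_mat_inj: "form_of_mat M = form_of_mat N \<Longrightarrow> mtrace M = mtrace N \<Longrightarrow> M = N"
  by (cases M; cases N) (simp add: form_of_mat_def mtrace_def)

lemma form_of_mat_surj:
  assumes "disc f = t^2 - 4"
  shows "\<exists>M. mdet M = 1 \<and> mtrace M = t \<and> form_of_mat M = f"
proof -
  obtain a b c where f: "f = (a, b, c)" by (cases f)
  have disc: "(t - b) * (t + b) = 4 * (1 - a * c)"
    using assms by (simp add: f disc_def power2_eq_square algebra_simps)
  have "even (t - b)"
  proof (rule ccontr)
    assume "odd (t - b)"
    moreover from this have "odd (t + b)" by (metis even_add even_diff)
    ultimately show False using disc by (metis even_mult_iff dvd_mult2 even_numeral)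
  qed
  then obtain r where r: "t - b = 2 * r" by (blast elim: evenE)
  have "t = 2 * r + b" using r by simp
  then have "4 * (r * (r + b) + c * a) = 4" using disc by (simp add: algebra_simps)
  then have "r * (r + b) + c * a = 1" by simp
  then have "mdet (r, -c, a, r + b) = 1 \<and> mtrace (r, -c, a, r + b) = t \<and> form_of_mat (r, -c, a, r + b) = f"
    using r by (simp add: mdet_def mtrace_def form_of_mat_def f algebra_simps)
  then show ?thesis by blast
qed

lemma square_minus_4_not_square:
  fixes t s :: int
  assumes "t \<noteq> 2" "t \<noteq> -2"
  shows "t^2 - 4 \<noteq> s^2"
proof
  assume "t^2 - 4 = s^2"
  define u where "u = \<bar>t\<bar>"
  define v where "v = \<bar>s\<bar>"
  have "u \<ge> 0" "v \<ge> 0" by (simp_all add: u_def v_def)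
  have uv: "u * u = v * v + 4"
    using \<open>t^2 - 4 = s^2\<close> by (simp add: u_def v_def power2_eq_square[symmetric])
  have "v < u"
  proof (rule ccontr)
    assume "\<not> v < u"
    then have "u * u \<le> v * v" using \<open>u \<ge> 0\<close> by (simp add: mult_mono)
    with uv show False by simp
  qed
  then have "(v + 1) * (v + 1) \<le> u * u" using \<open>v \<ge> 0\<close> by (simp add: mult_mono)
  with uv have "v \<le> 1" by (simp add: algebra_simps)
  then have "v * v \<le> 1" using \<open>v \<ge> 0\<close> by (simp add: mult_le_one)
  with uv have "4 \<le> u * u" "u * u < 3 * 3" by simp_all
  then have "2 \<le> u" "u < 3"
    using \<open>u \<ge> 0\<close> mult_strict_mono[of u 2 u 2] mult_mono[of 3 u 3 u] by (auto simp: not_le[symmetric])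
  then have "\<bar>t\<bar> = 2" by (simp add: u_def)
  with assms show False by (simp add: abs_if split: if_splits)
qed

definition reduced :: "bqf \<Rightarrow> bool" where
  "reduced f = (case f of (a, b, c) \<Rightarrow> \<bar>b\<bar> \<le> \<bar>a\<bar> \<and> \<bar>a\<bar> \<le> \<bar>c\<bar>)"

lemma reduced_bound:
  assumes nonsquare: "\<forall>s. D \<noteq> s^2" and disc: "disc (a, b, c) = D" and red: "reduced (a, b, c)"
  shows "\<bar>a\<bar> \<le> \<bar>D\<bar> \<and> \<bar>b\<bar> \<le> \<bar>D\<bar> \<and> \<bar>c\<bar> \<le> \<bar>D\<bar>"
proof -
  have r: "\<bar>b\<bar> \<le> \<bar>a\<bar>" "\<bar>a\<bar> \<le> \<bar>c\<bar>" using red by (simp_all add: reduced_def)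
  have "a \<noteq> 0" using nonsquare disc by (auto simp: disc_def)
  have D: "D = b * b - 4 * (a * c)" using disc by (simp add: disc_def power2_eq_square)
  have "b * b \<le> \<bar>a\<bar> * \<bar>c\<bar>"
  proof -
    have "b * b = \<bar>b\<bar> * \<bar>b\<bar>" by (simp add: abs_mult[symmetric])
    also have "\<dots> \<le> \<bar>a\<bar> * \<bar>c\<bar>" using r by (intro mult_mono) simp_all
    finally show ?thesis .
  qed
  moreover have "\<bar>c\<bar> \<le> \<bar>a\<bar> * \<bar>c\<bar>"
    using \<open>a \<noteq> 0\<close> by (simp add: mult_right_mono[of 1 "\<bar>a\<bar>" "\<bar>c\<bar>", simplified])
  moreover have "\<bar>a * c\<bar> = \<bar>a\<bar> * \<bar>c\<bar>" by (simp add: abs_mult)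
  ultimately have "\<bar>c\<bar> \<le> \<bar>D\<bar>" unfolding D by (smt (verit) zero_le_square)
  with r show ?thesis by simp
qed

lemma exists_reduced_qf_equiv:
  assumes nonsquare: "\<forall>s. D \<noteq> s^2" and disc: "disc f = D"
  shows "\<exists>g. qf_equiv f g \<and> reduced g"
proof -
  obtain a b c where f: "f = (a, b, c)" by (cases f)
  have "disc (a, b, c) = D \<Longrightarrow> \<exists>g. qf_equiv (a, b, c) g \<and> reduced g"
  proof (induction "nat \<bar>a\<bar>" arbitrary: a b c rule: less_induct)
    case less
    have "a \<noteq> 0" using nonsquare less.prems by (auto simp: disc_def)
    define k where "k = (if a > 0 then - ((b + \<bar>a\<bar>) div (2 * \<bar>a\<bar>)) else (b + \<bar>a\<bar>) div (2 * \<bar>a\<bar>))"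
    define b1 where "b1 = b + 2 * a * k"
    define c1 where "c1 = a * k^2 + b * k + c"
    have "b1 = (b + \<bar>a\<bar>) mod (2 * \<bar>a\<bar>) - \<bar>a\<bar>"
      using \<open>a \<noteq> 0\<close> minus_div_mult_eq_mod[of "b + \<bar>a\<bar>" "2 * \<bar>a\<bar>"]
      by (auto simp: b1_def k_def abs_if algebra_simps)
    moreover have "0 < 2 * \<bar>a\<bar>" using \<open>a \<noteq> 0\<close> by simp
    ultimately have "\<bar>b1\<bar> \<le> \<bar>a\<bar>"
      using pos_mod_sign[of "2 * \<bar>a\<bar>" "b + \<bar>a\<bar>"] pos_mod_bound[of "2 * \<bar>a\<bar>" "b + \<bar>a\<bar>"]
      by arith
    have equiv1: "qf_equiv (a, b, c) (a, b1, c1)"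
      unfolding qf_equiv_iff_qf_act
      by (rule exI[of _ "(1, k, 0, 1)"])
        (simp add: mdet_def qf_act_def b1_def c1_def power2_eq_square algebra_simps)
    show ?case
    proof (cases "\<bar>a\<bar> \<le> \<bar>c1\<bar>")
      case True
      then show ?thesis using equiv1 \<open>\<bar>b1\<bar> \<le> \<bar>a\<bar>\<close> by (auto simp: reduced_def)
    next
      case False
      have equiv2: "qf_equiv (a, b1, c1) (c1, - b1, a)"
        unfolding qf_equiv_iff_qf_act
        by (rule exI[of _ "(0, -1, 1, 0)"]) (simp add: mdet_def qf_act_def power2_eq_square)
      have "disc (c1, - b1, a) = D"
        using disc_qf_equiv[OF equiv1] disc_qf_equiv[OF equiv2] less.prems by simp
      moreover have "nat \<bar>c1\<bar> < nat \<bar>a\<bar>" using False by simp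
      ultimately obtain g where "qf_equiv (c1, - b1, a) g" "reduced g" using less.hyps by blast
      then show ?thesis using equiv1 equiv2 qf_equiv_trans by blast
    qed
  qed
  with disc show ?thesis by (simp add: f)
qed

lemma finite_qf_classes:
  assumes nonsquare: "\<forall>s. D \<noteq> s^2"
  shows "finite (qf_classes D)"
proof -
  define R where "R = {(f, g). qf_equiv f g}"
  define B where "B = {-\<bar>D\<bar>..\<bar>D\<bar>} \<times> {-\<bar>D\<bar>..\<bar>D\<bar>} \<times> {-\<bar>D\<bar>..\<bar>D\<bar>}"
  have "qf_classes D \<subseteq> (\<lambda>f. R `` {f}) ` B"
  proof
    fix C assume "C \<in> qf_classes D"
    then obtain f where f: "disc f = D" "C = R `` {f}"
      unfolding qf_classes_def R_def by (auto elim: quotientE)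
    obtain g where g: "qf_equiv f g" "reduced g"
      using exists_reduced_qf_equiv[OF nonsquare f(1)] by blast
    obtain a b c where abc: "g = (a, b, c)" by (cases g)
    have "disc (a, b, c) = D" using disc_qf_equiv[OF g(1)] f(1) by (simp add: abc)
    with g(2) have "\<bar>a\<bar> \<le> \<bar>D\<bar> \<and> \<bar>b\<bar> \<le> \<bar>D\<bar> \<and> \<bar>c\<bar> \<le> \<bar>D\<bar>"
      using reduced_bound[OF nonsquare] by (simp add: abc)
    then have "g \<in> B" by (auto simp: abc B_def abs_le_iff)
    moreover have "R `` {f} = R `` {g}"
      using equiv_class_eq[OF equiv_qf_equiv] g(1) by (simp add: R_def)
    ultimately show "C \<in> (\<lambda>f. R `` {f}) ` B" using f by blast
  qed
  moreover have "finite B" by (simp add: B_def)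
  ultimately show ?thesis by (meson finite_imageI finite_subset)
qed

section \<open>Conjugacy classes and classes of forms\<close>

lemma braid_conj_refl: "braid_conj w w"
  unfolding braid_conj_def by (intro exI[of _ "[]"]) simp

lemma braid_conj_sym:
  assumes "braid_conj w v"
  shows "braid_conj v w"
proof -
  obtain u where u: "braid_eq w (u @ v @ inv_word u)"
    using assms unfolding braid_conj_def by blast
  have "braid_eq (inv_word u @ w @ u) ((inv_word u @ u) @ v @ (inv_word u @ u))"
    using braid_eq_cong[OF u, of "inv_word u" u] by simp
  also have "braid_eq \<dots> ([] @ v @ [])"
    using braid_eq_append[OF braid_eq_inv_left braid_eq_append[OF braid_eq_refl braid_eq_inv_left]] .
  finally have "braid_eq v (inv_word u @ w @ inv_word (inv_word u))"
    by (simp add: braid_eq_sym)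
  then show ?thesis unfolding braid_conj_def by blast
qed

lemma braid_conj_trans:
  assumes "braid_conj w v" "braid_conj v x"
  shows "braid_conj w x"
proof -
  obtain u u' where u: "braid_eq w (u @ v @ inv_word u)" and u': "braid_eq v (u' @ x @ inv_word u')"
    using assms unfolding braid_conj_def by blast
  have "braid_eq w ((u @ u') @ x @ inv_word (u @ u'))"
    using braid_eq_trans[OF u braid_eq_cong[OF u', of u "inv_word u"]] by simp
  then show ?thesis unfolding braid_conj_def by blast
qed

lemma conj_class_eq_iff: "conj_class g = conj_class g' \<longleftrightarrow> braid_conj g g'"
proof
  assume "conj_class g = conj_class g'"
  then show "braid_conj g g'"
    using braid_conj_refl[of g] by (auto simp: conj_class_def)
next
  assume "braid_conj g g'"
  then show "conj_class g = conj_class g'"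
    unfolding conj_class_def using braid_conj_sym braid_conj_trans by blast
qed

lemma eps_braid_conj: "braid_conj w v \<Longrightarrow> eps w = eps v"
  unfolding braid_conj_def by (auto dest!: eps_braid_eq)

lemma qf_equiv_if_braid_conj:
  assumes "braid_conj g g'"
  shows "qf_equiv (form_of_mat (phi g')) (form_of_mat (phi g))"
proof -
  obtain u where "braid_eq g (u @ g' @ inv_word u)"
    using assms unfolding braid_conj_def by blast
  then have "phi g = mmult (phi u) (mmult (phi g') (minv (phi u)))"
    by (simp add: phi_braid_eq phi_inv_word)
  then have "form_of_mat (phi g) = qf_act (minv (phi u)) (form_of_mat (phi g'))"
    by (simp add: qf_act_form_of_mat)
  then show ?thesis
    unfolding qf_equiv_iff_qf_act by (metis mdet_minv mdet_phi)
qed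

lemma braid_conj_if_qf_equiv:
  assumes equiv: "qf_equiv (form_of_mat (phi g)) (form_of_mat (phi g'))"
    and trace: "mtrace (phi g) = mtrace (phi g')" and eps: "\<bar>eps g - eps g'\<bar> < 12"
  shows "braid_conj g' g"
proof -
  obtain Q where Q: "mdet Q = 1" "form_of_mat (phi g') = qf_act Q (form_of_mat (phi g))"
    using equiv unfolding qf_equiv_iff_qf_act by blast
  then have "phi g' = mmult (minv Q) (mmult (phi g) Q)"
    using trace mtrace_conj[OF Q(1)] by (intro form_of_mat_inj) (simp_all add: qf_act_form_of_mat)
  moreover obtain u where u: "phi u = minv Q"
    using phi_surj mdet_minv Q(1) by metis
  ultimately have "phi (u @ g @ inv_word u) = phi g'"
    by (simp add: phi_inv_word)
  moreover have "\<bar>eps (u @ g @ inv_word u) - eps g'\<bar> < 12"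
    using eps by simp
  ultimately have "braid_eq (u @ g @ inv_word u) g'"
    by (rule braid_eq_if_phi_eq_eps_close)
  then show ?thesis
    unfolding braid_conj_def by (blast intro: braid_eq_sym)
qed

definition trace_window :: "int \<Rightarrow> int \<Rightarrow> word set" where
  "trace_window t n = {g. mtrace (phi g) = t \<and> n \<le> eps g \<and> eps g < n + 12}"

definition form_class :: "word \<Rightarrow> bqf set" where
  "form_class g = {(f, f'). qf_equiv f f'} `` {form_of_mat (phi g)}"

lemma conj_class_eq_iff_form_class_eq:
  assumes "g \<in> trace_window t n" "g' \<in> trace_window t n"
  shows "conj_class g = conj_class g' \<longleftrightarrow> form_class g = form_class g'"
proof -
  have "form_class g = form_class g' \<longleftrightarrow> qf_equiv (form_of_mat (phi g)) (form_of_mat (phi g'))"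
    unfolding form_class_def using eq_equiv_class_iff[OF equiv_qf_equiv] by simp
  moreover have "mtrace (phi g) = mtrace (phi g')" "\<bar>eps g - eps g'\<bar> < 12"
    using assms by (auto simp: trace_window_def)
  ultimately show ?thesis
    using conj_class_eq_iff braid_conj_sym qf_equiv_sym qf_equiv_if_braid_conj braid_conj_if_qf_equiv
    by metis
qed

lemma qf_classes_eq_form_class_image: "qf_classes (t^2 - 4) = form_class ` trace_window t n"
proof
  show "form_class ` trace_window t n \<subseteq> qf_classes (t^2 - 4)"
  proof
    fix C assume "C \<in> form_class ` trace_window t n"
    then obtain g where g: "g \<in> trace_window t n" "C = form_class g" by blast
    then have "disc (form_of_mat (phi g)) = t^2 - 4"
      by (simp add: disc_form_of_mat mdet_phi trace_window_def)
    then show "C \<in> qf_classes (t^2 - 4)"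
      unfolding qf_classes_def g(2) form_class_def by (intro quotientI) simp
  qed
next
  show "qf_classes (t^2 - 4) \<subseteq> form_class ` trace_window t n"
  proof
    fix C assume "C \<in> qf_classes (t^2 - 4)"
    then obtain f where f: "disc f = t^2 - 4" "C = {(f, f'). qf_equiv f f'} `` {f}"
      unfolding qf_classes_def by (auto elim: quotientE)
    obtain M where M: "mdet M = 1" "mtrace M = t" "form_of_mat M = f"
      using form_of_mat_surj[OF f(1)] by blast
    obtain w where "phi w = M" "n \<le> eps w" "eps w < n + 12"
      using phi_surj_eps_window[OF M(1)] by blast
    then have "w \<in> trace_window t n" "C = form_class w"
      using M f(2) by (simp_all add: trace_window_def form_class_def)
    then show "C \<in> form_class ` trace_window t n" by blast
  qed
qed

lemma UN_X_eq_conj_class_image: "(\<Union>j<12. X t (n + int j)) = conj_class ` trace_window t n"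
proof
  show "(\<Union>j<12. X t (n + int j)) \<subseteq> conj_class ` trace_window t n"
    by (auto simp: X_def trace_window_def)
next
  show "conj_class ` trace_window t n \<subseteq> (\<Union>j<12. X t (n + int j))"
  proof
    fix C assume "C \<in> conj_class ` trace_window t n"
    then obtain g where g: "g \<in> trace_window t n" "C = conj_class g" by blast
    then have "nat (eps g - n) < 12" "eps g = n + int (nat (eps g - n))"
      by (auto simp: trace_window_def)
    with g show "C \<in> (\<Union>j<12. X t (n + int j))"
      unfolding X_def trace_window_def by blast
  qed
qed

lemma X_disjoint: "m \<noteq> m' \<Longrightarrow> X t m \<inter> X t m' = {}"
  by (auto simp: X_def conj_class_eq_iff dest: eps_braid_conj)

lemma bij_betw_images_if_same_fibres:
  assumes "\<And>x y. x \<in> A \<Longrightarrow> y \<in> A \<Longrightarrow> f x = f y \<longleftrightarrow> g x = g y"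
  shows "bij_betw (\<lambda>b. g (inv_into A f b)) (f ` A) (g ` A)"
proof (rule bij_betw_imageI)
  show "inj_on (\<lambda>b. g (inv_into A f b)) (f ` A)"
    by (rule inj_onI) (metis assms f_inv_into_f inv_into_into)
  show "(\<lambda>b. g (inv_into A f b)) ` f ` A = g ` A"
    using assms by (auto simp: image_iff) (metis f_inv_into_f image_eqI inv_into_into)+
qed

theorem lemma3p1:
  fixes t n :: int
  assumes "t \<noteq> 2" and "t \<noteq> -2"
  shows "finite (qf_classes (t^2 - 4)) \<and> (\<forall>j<12. finite (X t (n + int j))) \<and>
         h t = (\<Sum>j<12. card (X t (n + int j)))"
proof -
  let ?W = "trace_window t n"
  have finite_classes: "finite (qf_classes (t^2 - 4))"
    using finite_qf_classes square_minus_4_not_square[OF assms] by blast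
  have "bij_betw (\<lambda>C. form_class (inv_into ?W conj_class C)) (conj_class ` ?W) (qf_classes (t^2 - 4))"
    unfolding qf_classes_eq_form_class_image[of t n]
    by (rule bij_betw_images_if_same_fibres) (rule conj_class_eq_iff_form_class_eq)
  then have "finite (\<Union>j<12. X t (n + int j))" "card (\<Union>j<12. X t (n + int j)) = h t"
    using finite_classes bij_betw_finite bij_betw_same_card
    by (fastforce simp: UN_X_eq_conj_class_image h_def)+
  moreover from this(1) have finite_X: "\<forall>j<12. finite (X t (n + int j))"
    by (auto intro: finite_subset)
  moreover have "card (\<Union>j<12. X t (n + int j)) = (\<Sum>j<12. card (X t (n + int j)))"
    using finite_X X_disjoint by (intro card_UN_disjoint) auto
  ultimately show ?thesis using finite_classes by simp
qed

end
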